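(* For every integer $n>1$ there exists a nonassociative noncommutative C-loop whose nucleus has exactly $n$ elements.
   Context: A C-loop is a loop satisfying $x(y(yz))=((xy)y)z$ for all $x,y,z$. The nucleus of a loop is the set of elements $a$ with $a(yz)=(ay)z$, $y(az)=(ya)z$, $y(za)=(yz)a$ for all $y,z$. *)

theory Defs
  imports Main
begin

definition is_loop :: "'a set \<Rightarrow> ('a \<Rightarrow> 'a \<Rightarrow> 'a) \<Rightarrow> 'a \<Rightarrow> bool" where
  "is_loop L m e \<longleftrightarrow>
     e \<in> L \<and>
     (\<forall>x\<in>L. \<forall>y\<in>L. m x y \<in> L) \<and>
     (\<forall>x\<in>L. m e x = x \<and> m x e = x) \<and>
     (\<forall>a\<in>L. \<forall>b\<in>L. \<exists>!x. x \<in> L \<and> m a x = b) \<and>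
     (\<forall>a\<in>L. \<forall>b\<in>L. \<exists>!y. y \<in> L \<and> m y a = b)"

definition is_C_loop :: "'a set \<Rightarrow> ('a \<Rightarrow> 'a \<Rightarrow> 'a) \<Rightarrow> 'a \<Rightarrow> bool" where
  "is_C_loop L m e \<longleftrightarrow> is_loop L m e \<and>
     (\<forall>x\<in>L. \<forall>y\<in>L. \<forall>z\<in>L. m x (m y (m y z)) = m (m (m x y) y) z)"

definition nucleus :: "'a set \<Rightarrow> ('a \<Rightarrow> 'a \<Rightarrow> 'a) \<Rightarrow> 'a set" where
  "nucleus L m = {a \<in> L. \<forall>y\<in>L. \<forall>z\<in>L.
      m a (m y z) = m (m a y) z \<and> m y (m a z) = m (m y a) z \<and> m y (m z a) = m (m y z) a}"

definition associative_on :: "'a set \<Rightarrow> ('a \<Rightarrow> 'a \<Rightarrow> 'a) \<Rightarrow> bool" where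
  "associative_on L m \<longleftrightarrow> (\<forall>x\<in>L. \<forall>y\<in>L. \<forall>z\<in>L. m x (m y z) = m (m x y) z)"

definition commutative_on :: "'a set \<Rightarrow> ('a \<Rightarrow> 'a \<Rightarrow> 'a) \<Rightarrow> bool" where
  "commutative_on L m \<longleftrightarrow> (\<forall>x\<in>L. \<forall>y\<in>L. m x y = m y x)"

end

theory Submission
  imports Defs "HOL-Number_Theory.Cong"
begin

(* The loops are central extensions of the Steiner loop S of order 10 (the nine points of the
   affine plane AG(2,3) together with an identity) by the cyclic group Z_n, with product
   (a, s) (b, t) = (a + b + f s t, s t).  Since S satisfies y (y z) = z = (z y) y, the C-law of
   the extension reduces to the cocycle identities f y z + f y (y z) = f y y = f x y + f (x y) y,
   which hold when f picks one vector out of each pair {v, -v} of directions of the plane.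
   The nucleus of S is trivial, and the nucleus of the extension is then exactly the central
   subgroup Z_n: it has n elements while the loop has 10 n, so the loop is not associative, and
   it is not commutative because f is not symmetric. *)

lemma is_loop_if_inverse_laws:
  assumes "e \<in> L" and closed: "\<forall>x\<in>L. \<forall>y\<in>L. m x y \<in> L"
    and "\<forall>x\<in>L. m e x = x \<and> m x e = x"
    and inverse_laws: "\<forall>y\<in>L. \<forall>z\<in>L. m y (m y z) = z \<and> m (m z y) y = z"
  shows "is_loop L m e"
proof -
  have left_division: "\<exists>!x. x \<in> L \<and> m a x = b" if "a \<in> L" "b \<in> L" for a b
  proof (rule ex1I[of _ "m a b"])
    show "m a b \<in> L \<and> m a (m a b) = b"
      using that closed inverse_laws by blast
    show "x = m a b" if "x \<in> L \<and> m a x = b" for x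
      using \<open>a \<in> L\<close> that inverse_laws by force
  qed
  have right_division: "\<exists>!y. y \<in> L \<and> m y a = b" if "a \<in> L" "b \<in> L" for a b
  proof (rule ex1I[of _ "m b a"])
    show "m b a \<in> L \<and> m (m b a) a = b"
      using that closed inverse_laws by blast
    show "y = m b a" if "y \<in> L \<and> m y a = b" for y
      using \<open>a \<in> L\<close> that inverse_laws by force
  qed
  show ?thesis
    unfolding is_loop_def using assms(1-3) left_division right_division
    by (intro conjI ballI) simp_all
qed

lemma nucleus_eq_if_associative_on: "associative_on L m \<Longrightarrow> nucleus L m = L"
  unfolding associative_on_def nucleus_def by auto

lemma nucleus_hom_image:
  assumes closed: "\<And>x y. x \<in> L \<Longrightarrow> y \<in> L \<Longrightarrow> m x y \<in> L"
    and hom: "\<And>x y. x \<in> L \<Longrightarrow> y \<in> L \<Longrightarrow> h (m x y) = m' (h x) (h y)"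
    and onto: "h ` L = L'"
  shows "h ` nucleus L m \<subseteq> nucleus L' m'"
proof
  fix b assume "b \<in> h ` nucleus L m"
  then obtain a where a: "a \<in> nucleus L m" and b: "b = h a"
    by blast
  have "a \<in> L"
    using a by (simp add: nucleus_def)
  show "b \<in> nucleus L' m'"
    unfolding nucleus_def
  proof (intro CollectI conjI ballI)
    show "b \<in> L'"
      using \<open>a \<in> L\<close> b onto by blast
    fix y' z' assume "y' \<in> L'" "z' \<in> L'"
    then obtain y z where yz: "y \<in> L" "z \<in> L" and y': "y' = h y" and z': "z' = h z"
      using onto by blast
    have assoc:
      "m a (m y z) = m (m a y) z" "m y (m a z) = m (m y a) z" "m y (m z a) = m (m y z) a"
      using a yz by (simp_all add: nucleus_def)
    show "m' b (m' y' z') = m' (m' b y') z'"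
      using arg_cong[OF assoc(1), of h] \<open>a \<in> L\<close> yz closed by (simp add: hom b y' z')
    show "m' y' (m' b z') = m' (m' y' b) z'"
      using arg_cong[OF assoc(2), of h] \<open>a \<in> L\<close> yz closed by (simp add: hom b y' z')
    show "m' y' (m' z' b) = m' (m' y' z') b"
      using arg_cong[OF assoc(3), of h] \<open>a \<in> L\<close> yz closed by (simp add: hom b y' z')
  qed
qed

lemma ex1_mod_add_eq:
  fixes a b n :: nat
  assumes "b < n"
  shows "\<exists>!c. c < n \<and> (a + c) mod n = b"
proof (rule ex_ex1I)
  let ?c = "(b + (n - a mod n)) mod n"
  have "a mod n < n"
    using assms by simp
  then have "a mod n + (b + (n - a mod n)) = b + n"
    by simp
  then have "(a + ?c) mod n = b"
    using assms by (metis mod_add_left_eq mod_add_right_eq mod_add_self2 mod_less)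
  then show "\<exists>c. c < n \<and> (a + c) mod n = b"
    using assms by (intro exI[of _ ?c]) simp
next
  fix c c' assume "c < n \<and> (a + c) mod n = b" "c' < n \<and> (a + c') mod n = b"
  then show "c = c'"
    using cong_add_lcancel_nat[of a c c' n] by (simp add: cong_def)
qed

lemma ex1_div_mod:
  fixes k n :: nat
  assumes "0 < k" and "\<exists>!u. u < k \<and> P u" and "\<And>u. \<exists>!c. c < n \<and> Q u c"
  shows "\<exists>!x. x < k * n \<and> P (x mod k) \<and> Q (x mod k) (x div k)"
proof -
  obtain u where u: "u < k \<and> P u"
    and u_unique: "\<forall>u'. u' < k \<and> P u' \<longrightarrow> u' = u"
    by (rule ex1E[OF assms(2)])
  obtain c where c: "c < n \<and> Q u c"
    and c_unique: "\<forall>c'. c' < n \<and> Q u c' \<longrightarrow> c' = c"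
    by (rule ex1E[OF assms(3)])
  show ?thesis
  proof (rule ex1I[of _ "k * c + u"])
    have "(k * c + u) div k = c" "(k * c + u) mod k = u"
      using u by simp_all
    then show
      "k * c + u < k * n \<and> P ((k * c + u) mod k) \<and> Q ((k * c + u) mod k) ((k * c + u) div k)"
      using u c div_less_iff_less_mult[OF \<open>0 < k\<close>, of "k * c + u" n]
      by (simp add: mult.commute)
    show "x = k * c + u" if x: "x < k * n \<and> P (x mod k) \<and> Q (x mod k) (x div k)" for x
    proof -
      have "x mod k = u"
        using x u_unique \<open>0 < k\<close> by simp
      moreover have "x div k = c"
        using x \<open>x mod k = u\<close> c_unique \<open>0 < k\<close>
        by (simp add: div_less_iff_less_mult mult.commute)
      ultimately show ?thesis
        by (metis mult_div_mod_eq)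
    qed
  qed
qed

lemma mod_add3_mod_left: "((a :: nat) mod n + b + c) mod n = (a + b + c) mod n"
  by (metis mod_add_left_eq)

lemma mod_add3_mod_middle: "((a :: nat) + b mod n + c) mod n = (a + b + c) mod n"
  by (metis mod_add_left_eq mod_add_right_eq)

lemma nat_eqI_div_mod: "(x :: nat) div k = y div k \<Longrightarrow> x mod k = y mod k \<Longrightarrow> x = y"
  by (metis div_mult_mod_eq)

locale central_extension =
  fixes k n :: nat and p f :: "nat \<Rightarrow> nat \<Rightarrow> nat"
  assumes n_pos: "0 < n"
    and base_loop: "is_loop {..<k} p 0"
    and cocycle_normalized: "\<And>t. t < k \<Longrightarrow> f 0 t = 0 \<and> f t 0 = 0"
begin

(* x < k * n stands for the pair (x div k, x mod k) of Z_n \<times> {..<k}. *)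
definition ext_mult :: "nat \<Rightarrow> nat \<Rightarrow> nat" where
  "ext_mult x y =
     k * ((x div k + y div k + f (x mod k) (y mod k)) mod n) + p (x mod k) (y mod k)"

lemma k_pos: "0 < k"
  using base_loop by (simp add: is_loop_def)

lemma mod_k_less [simp]: "x mod k < k"
  using k_pos by simp

lemma base_closed [simp]: "s < k \<Longrightarrow> t < k \<Longrightarrow> p s t < k"
  using base_loop by (simp add: is_loop_def)

lemma base_identity [simp]: "t < k \<Longrightarrow> p 0 t = t" "t < k \<Longrightarrow> p t 0 = t"
  using base_loop by (simp_all add: is_loop_def)

lemma cocycle_zero [simp]: "t < k \<Longrightarrow> f 0 t = 0" "t < k \<Longrightarrow> f t 0 = 0"
  using cocycle_normalized by simp_all

lemma base_left_division: "s < k \<Longrightarrow> t < k \<Longrightarrow> \<exists>!u. u < k \<and> p s u = t"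
  using base_loop by (simp add: is_loop_def)

lemma base_right_division: "s < k \<Longrightarrow> t < k \<Longrightarrow> \<exists>!u. u < k \<and> p u s = t"
  using base_loop by (simp add: is_loop_def)

lemma ext_mult_div [simp]:
  "ext_mult x y div k = (x div k + y div k + f (x mod k) (y mod k)) mod n"
  unfolding ext_mult_def using k_pos by simp

lemma ext_mult_mod [simp]: "ext_mult x y mod k = p (x mod k) (y mod k)"
  unfolding ext_mult_def using k_pos by simp

lemma less_iff_div_less: "x < k * n \<longleftrightarrow> x div k < n"
  using k_pos by (simp add: div_less_iff_less_mult mult.commute)

lemma ext_mult_closed: "ext_mult x y < k * n"
  using n_pos by (simp add: less_iff_div_less)

lemma ext_mult_eq_iff:
  "ext_mult x y = z \<longleftrightarrow>
     (x div k + y div k + f (x mod k) (y mod k)) mod n = z div k \<and>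
     p (x mod k) (y mod k) = z mod k"
  by (metis ext_mult_div ext_mult_mod nat_eqI_div_mod)

lemma ext_mult_identity: "x < k * n \<Longrightarrow> ext_mult 0 x = x \<and> ext_mult x 0 = x"
  by (simp add: ext_mult_eq_iff less_iff_div_less)

lemma left_division:
  assumes "a < k * n" "b < k * n"
  shows "\<exists>!x. x \<in> {..<k * n} \<and> ext_mult a x = b"
proof -
  have "ext_mult a x = b \<longleftrightarrow> p (a mod k) (x mod k) = b mod k \<and>
      (a div k + f (a mod k) (x mod k) + x div k) mod n = b div k" for x
    by (auto simp: ext_mult_eq_iff ac_simps)
  moreover have "\<exists>!x. x < k * n \<and> p (a mod k) (x mod k) = b mod k \<and>
      (a div k + f (a mod k) (x mod k) + x div k) mod n = b div k"
    using assms k_pos base_left_division ex1_mod_add_eq less_iff_div_less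
    by (intro ex1_div_mod) auto
  ultimately show ?thesis
    by simp
qed

lemma right_division:
  assumes "a < k * n" "b < k * n"
  shows "\<exists>!x. x \<in> {..<k * n} \<and> ext_mult x a = b"
proof -
  have "ext_mult x a = b \<longleftrightarrow> p (x mod k) (a mod k) = b mod k \<and>
      (a div k + f (x mod k) (a mod k) + x div k) mod n = b div k" for x
    by (auto simp: ext_mult_eq_iff ac_simps)
  moreover have "\<exists>!x. x < k * n \<and> p (x mod k) (a mod k) = b mod k \<and>
      (a div k + f (x mod k) (a mod k) + x div k) mod n = b div k"
    using assms k_pos base_right_division ex1_mod_add_eq less_iff_div_less
    by (intro ex1_div_mod) auto
  ultimately show ?thesis
    by simp
qed

lemma is_loop_extension: "is_loop {..<k * n} ext_mult 0"
  unfolding is_loop_def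
  using k_pos n_pos ext_mult_closed ext_mult_identity left_division right_division by simp

lemma is_C_loop_extension:
  assumes base_C_law: "\<And>x y z. x < k \<Longrightarrow> y < k \<Longrightarrow> z < k \<Longrightarrow>
      p x (p y (p y z)) = p (p (p x y) y) z"
    and cocycle_C_law: "\<And>x y z. x < k \<Longrightarrow> y < k \<Longrightarrow> z < k \<Longrightarrow>
      (f y z + f y (p y z) + f x (p y (p y z))) mod n =
      (f x y + f (p x y) y + f (p (p x y) y) z) mod n"
  shows "is_C_loop {..<k * n} ext_mult 0"
proof -
  have "ext_mult x (ext_mult y (ext_mult y z)) = ext_mult (ext_mult (ext_mult x y) y) z"
    (is "?l = ?r") for x y z
  proof -
    let ?a = "x div k + y div k + y div k + z div k"
    define x' y' z' where "x' = x mod k" and "y' = y mod k" and "z' = z mod k"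
    have less_k: "x' < k" "y' < k" "z' < k"
      by (simp_all add: x'_def y'_def z'_def)
    have "?l div k = (?a + (f y' z' + f y' (p y' z') + f x' (p y' (p y' z')))) mod n"
      by (simp add: x'_def y'_def z'_def mod_add3_mod_left mod_add3_mod_middle)
        (simp add: ac_simps)
    also have "\<dots> = (?a + (f x' y' + f (p x' y') y' + f (p (p x' y') y') z')) mod n"
      using cocycle_C_law[OF less_k] by (metis mod_add_right_eq)
    also have "\<dots> = ?r div k"
      by (simp add: x'_def y'_def z'_def mod_add3_mod_left mod_add3_mod_middle)
        (simp add: ac_simps)
    finally show ?thesis
      using base_C_law[OF less_k] by (simp add: ext_mult_eq_iff x'_def y'_def z'_def)
  qed
  then show ?thesis
    unfolding is_C_loop_def using is_loop_extension by simp
qed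

lemma nucleus_extension:
  assumes "nucleus {..<k} p = {0}"
  shows "nucleus {..<k * n} ext_mult = (\<lambda>a. k * a) ` {..<n}"
proof
  show "nucleus {..<k * n} ext_mult \<subseteq> (\<lambda>a. k * a) ` {..<n}"
  proof
    fix x assume x: "x \<in> nucleus {..<k * n} ext_mult"
    have "(\<lambda>x. x mod k) ` {..<k * n} = {..<k}"
    proof (intro equalityI subsetI)
      show "t \<in> (\<lambda>x. x mod k) ` {..<k * n}" if "t \<in> {..<k}" for t
        using that n_pos less_iff_div_less by (intro image_eqI[of _ _ t]) auto
    qed auto
    then have "x mod k \<in> nucleus {..<k} p"
      using x nucleus_hom_image[of "{..<k * n}" ext_mult "\<lambda>x. x mod k" p] ext_mult_closed by auto
    then have "x mod k = 0"
      using assms by simp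
    moreover have "x div k < n"
      using x less_iff_div_less by (simp add: nucleus_def)
    ultimately show "x \<in> (\<lambda>a. k * a) ` {..<n}"
      by (metis add_0_right image_eqI lessThan_iff mult_div_mod_eq)
  qed
  show "(\<lambda>a. k * a) ` {..<n} \<subseteq> nucleus {..<k * n} ext_mult"
  proof
    fix x assume "x \<in> (\<lambda>a. k * a) ` {..<n}"
    then obtain a where "a < n" and x: "x = k * a"
      by auto
    have "x div k = a" "x mod k = 0"
      using x k_pos by simp_all
    then show "x \<in> nucleus {..<k * n} ext_mult"
      unfolding nucleus_def using \<open>a < n\<close>
      by (simp add: less_iff_div_less ext_mult_eq_iff mod_add3_mod_left mod_add3_mod_middle)
        (simp add: ac_simps mod_simps)
  qed
qed

lemma card_nucleus_extension:
  assumes "nucleus {..<k} p = {0}"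
  shows "card (nucleus {..<k * n} ext_mult) = n"
  using nucleus_extension[OF assms] k_pos by (simp add: card_image inj_on_def)

lemma not_associative_extension:
  assumes "1 < k" and "nucleus {..<k} p = {0}"
  shows "\<not> associative_on {..<k * n} ext_mult"
proof
  assume "associative_on {..<k * n} ext_mult"
  then have "k * n = n"
    using nucleus_eq_if_associative_on card_nucleus_extension[OF assms(2)] by fastforce
  then show False
    using assms(1) n_pos by simp
qed

lemma not_commutative_extension:
  assumes "s < k" "t < k" "f s t mod n \<noteq> f t s mod n"
  shows "\<not> commutative_on {..<k * n} ext_mult"
proof
  assume "commutative_on {..<k * n} ext_mult"
  moreover have "s < k * n" "t < k * n"
    using assms(1,2) less_iff_div_less n_pos by simp_all
  ultimately have "ext_mult s t div k = ext_mult t s div k"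
    unfolding commutative_on_def by simp
  then show False
    using assms by simp
qed

end

(* The point (i, j) of AG(2,3) is encoded as 1 + 3 i + j.  Two distinct points multiply to the
   third point -(s + t) = 2 (s + t) on their line, s s = 0, and 0 is the identity. *)
definition steiner_mult :: "nat \<Rightarrow> nat \<Rightarrow> nat" where
  "steiner_mult s t =
    (if s = 0 then t else if t = 0 then s else if s = t then 0
     else 1 + 3 * (2 * ((s - 1) div 3 + (t - 1) div 3) mod 3)
            + 2 * ((s - 1) mod 3 + (t - 1) mod 3) mod 3)"

(* For distinct points, the value is 1 iff the direction (di, dj) = t - s lies in
   {(1, 0), (1, 1), (1, 2), (0, 1)}, which contains exactly one of v and -v.  On a line
   {y, z, y z} the directions from y to z and to y z are opposite, whence the cocycle identities. *)
definition steiner_cocycle :: "nat \<Rightarrow> nat \<Rightarrow> nat" where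
  "steiner_cocycle s t =
    (if s = 0 \<or> t = 0 then 0 else if s = t then 1
     else let di = ((t - 1) div 3 + 2 * ((s - 1) div 3)) mod 3;
              dj = ((t - 1) mod 3 + 2 * ((s - 1) mod 3)) mod 3
          in if di = 1 \<or> di = 0 \<and> dj = 1 then 1 else 0)"

lemma all_less_iff_list_all: "(\<forall>x<n. P x) \<longleftrightarrow> list_all P [0..<n]"
  by (auto simp: list_all_iff)

lemma ex_less_iff_list_ex: "(\<exists>x<n. P x) \<longleftrightarrow> list_ex P [0..<n]"
  by (auto simp: list_ex_iff)

lemma steiner_mult_commute: "steiner_mult s t = steiner_mult t s"
  by (simp add: steiner_mult_def ac_simps)

lemma steiner_mult_closed [rule_format]: "\<forall>s<10. \<forall>t<10. steiner_mult s t < 10"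
  unfolding all_less_iff_list_all by code_simp

lemma steiner_mult_cancel_left [rule_format]:
  "\<forall>y<10. \<forall>z<10. steiner_mult y (steiner_mult y z) = z"
  unfolding all_less_iff_list_all by code_simp

lemma steiner_cocycle_cancel_left [rule_format]:
  "\<forall>y<10. \<forall>z<10.
    steiner_cocycle y z + steiner_cocycle y (steiner_mult y z) = steiner_cocycle y y"
  unfolding all_less_iff_list_all by code_simp

lemma steiner_cocycle_cancel_right [rule_format]:
  "\<forall>x<10. \<forall>y<10.
    steiner_cocycle x y + steiner_cocycle (steiner_mult x y) y = steiner_cocycle y y"
  unfolding all_less_iff_list_all by code_simp

lemma steiner_not_nuclear [rule_format]:
  "\<forall>s<10. 0 < s \<longrightarrow>
    (\<exists>y<10. \<exists>z<10. steiner_mult s (steiner_mult y z) \<noteq> steiner_mult (steiner_mult s y) z)"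
  unfolding all_less_iff_list_all ex_less_iff_list_ex by code_simp

lemma steiner_mult_cancel_right:
  "y < 10 \<Longrightarrow> z < 10 \<Longrightarrow> steiner_mult (steiner_mult z y) y = z"
  using steiner_mult_cancel_left steiner_mult_commute by metis

lemma steiner_is_loop: "is_loop {..<10} steiner_mult 0"
  using steiner_mult_closed steiner_mult_cancel_left steiner_mult_cancel_right
  by (intro is_loop_if_inverse_laws) (simp_all add: steiner_mult_def)

lemma steiner_nucleus: "nucleus {..<10} steiner_mult = {0}"
proof (intro equalityI subsetI)
  show "s \<in> {0}" if "s \<in> nucleus {..<10} steiner_mult" for s
    using that steiner_not_nuclear[of s] by (auto simp: nucleus_def)
  show "s \<in> nucleus {..<10} steiner_mult" if "s \<in> {0}" for s
    using that by (simp add: nucleus_def steiner_mult_def)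
qed

lemma central_extension_steiner:
  "0 < n \<Longrightarrow> central_extension 10 n steiner_mult steiner_cocycle"
  by unfold_locales (simp_all add: steiner_is_loop steiner_cocycle_def)

theorem corollary3p4:
  fixes n :: nat
  assumes "n > 1"
  shows "\<exists>(L :: nat set) m e. is_C_loop L m e \<and> \<not> associative_on L m \<and>
           \<not> commutative_on L m \<and> finite (nucleus L m) \<and> card (nucleus L m) = n"
proof -
  interpret central_extension 10 n steiner_mult steiner_cocycle
    using assms central_extension_steiner by simp
  have "is_C_loop {..<10 * n} ext_mult 0"
    by (rule is_C_loop_extension)
      (simp_all add: steiner_mult_cancel_left steiner_mult_cancel_right steiner_mult_closed
        steiner_cocycle_cancel_left steiner_cocycle_cancel_right)
  moreover have "\<not> commutative_on {..<10 * n} ext_mult"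
    using assms by (intro not_commutative_extension[of 1 2]) (simp_all add: steiner_cocycle_def)
  ultimately show ?thesis
    using assms not_associative_extension steiner_nucleus card_nucleus_extension
    by (intro exI[of _ "{..<10 * n}"] exI[of _ ext_mult] exI[of _ 0])
      (simp add: card_ge_0_finite)
qed

end
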